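(* Let $\mathbb{P}_w$ be a distribution on $\mathbb{R}$ that is symmetric around zero, let $\boldsymbol{U}\in\mathbb{R}^{n\times n}$ be positive semi-definite, and let $\boldsymbol{w}=(w_1,\ldots,w_n)^\top$ have i.i.d. entries from $\mathbb{P}_w$. Then for any $\delta>0$, $$\mathbb{P}\bigl(\boldsymbol{w}^\top\boldsymbol{U}\boldsymbol{w}>\delta\|\boldsymbol{w}\|_2^2\bigr)\le\frac{\mathrm{tr}[\boldsymbol{U}]}{\delta n}.$$ *)

theory Defs
  imports "HOL-Analysis.Analysis" "HOL-Probability.Probability"
begin

definition psd :: "real^'n^'n \<Rightarrow> bool" where
  "psd U \<longleftrightarrow> transpose U = U \<and> (\<forall>x. 0 \<le> x \<bullet> (U *v x))"

definition symmetric_distribution :: "real measure \<Rightarrow> bool" where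
  "symmetric_distribution M \<longleftrightarrow> prob_space M \<and> sets M = sets borel \<and> distr M borel uminus = M"

end

theory Submission
  imports Defs
begin

text \<open>
  Write \<open>w\<^sup>T U w = R(w) \<parallel>w\<parallel>\<^sup>2\<close> with the Rayleigh quotient
  \<open>R(w) = \<Sum>\<^sub>i\<^sub>j U\<^sub>i\<^sub>j w\<^sub>i w\<^sub>j / \<parallel>w\<parallel>\<^sup>2\<close>, which is nonnegative and bounded, so by Markov's
  inequality the probability is at most \<open>E R(w) / \<delta>\<close>. Flipping the sign of \<open>w\<^sub>i\<close> preserves
  the law of \<open>w\<close> but negates \<open>w\<^sub>i w\<^sub>j / \<parallel>w\<parallel>\<^sup>2\<close> for \<open>j \<noteq> i\<close>, so the off-diagonal terms have
  mean zero. Permuting coordinates also preserves the law, so the \<open>n\<close> diagonal means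
  \<open>E (w\<^sub>i\<^sup>2 / \<parallel>w\<parallel>\<^sup>2)\<close> coincide, and they sum to at most \<open>1\<close>. Hence \<open>E R(w) \<le> tr U / n\<close>.
\<close>

lemma (in product_sigma_finite) distr_PiM_componentwise:
  assumes "finite I"
    and f_meas: "\<And>i. i \<in> I \<Longrightarrow> f i \<in> M i \<rightarrow>\<^sub>M M i"
    and f_distr: "\<And>i. i \<in> I \<Longrightarrow> distr (M i) (M i) (f i) = M i"
  shows "distr (PiM I M) (PiM I M) (\<lambda>w. \<lambda>i\<in>I. f i (w i)) = PiM I M"
proof (rule PiM_eqI[OF \<open>finite I\<close>])
  have meas: "(\<lambda>w. \<lambda>i\<in>I. f i (w i)) \<in> PiM I M \<rightarrow>\<^sub>M PiM I M"
    using f_meas by (intro measurable_restrict) auto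
  show "sets (distr (PiM I M) (PiM I M) (\<lambda>w. \<lambda>i\<in>I. f i (w i))) = sets (PiM I M)"
    by simp
  fix A assume A: "\<And>i. i \<in> I \<Longrightarrow> A i \<in> sets (M i)"
  have "(\<lambda>w. \<lambda>i\<in>I. f i (w i)) -` PiE I A \<inter> space (PiM I M)
      = PiE I (\<lambda>i. f i -` A i \<inter> space (M i))"
    by (auto simp: space_PiM PiE_iff)
  then have "emeasure (distr (PiM I M) (PiM I M) (\<lambda>w. \<lambda>i\<in>I. f i (w i))) (PiE I A)
      = emeasure (PiM I M) (PiE I (\<lambda>i. f i -` A i \<inter> space (M i)))"
    using A by (simp add: emeasure_distr[OF meas] sets_PiM_I_finite \<open>finite I\<close>)
  also have "\<dots> = (\<Prod>i\<in>I. emeasure (M i) (f i -` A i \<inter> space (M i)))"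
    using A f_meas by (intro emeasure_PiM \<open>finite I\<close>) (auto simp: measurable_sets)
  also have "\<dots> = (\<Prod>i\<in>I. emeasure (M i) (A i))"
    using A f_meas f_distr by (intro prod.cong refl) (metis emeasure_distr)
  finally show "emeasure (distr (PiM I M) (PiM I M) (\<lambda>w. \<lambda>i\<in>I. f i (w i))) (PiE I A)
      = (\<Prod>i\<in>I. emeasure (M i) (A i))" .
qed

lemma integral_distr_invariant:
  fixes f :: "'a \<Rightarrow> 'b::{banach, second_countable_topology}"
  assumes "T \<in> M \<rightarrow>\<^sub>M M" and "distr M M T = M" and "f \<in> borel_measurable M"
  shows "(\<integral>x. f (T x) \<partial>M) = integral\<^sup>L M f"
  using integral_distr[OF assms(1,3)] assms(2) by simp

lemma measurable_sign_flip [measurable]: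
  "(\<lambda>w. w(i := - w i)) \<in> PiM UNIV (\<lambda>_. borel) \<rightarrow>\<^sub>M PiM UNIV (\<lambda>_::'i. borel :: real measure)"
  by (rule measurable_PiM_single') (auto simp: space_PiM)

lemma measurable_permute [measurable]:
  "(\<lambda>w. w \<circ> p) \<in> PiM UNIV (\<lambda>_. borel) \<rightarrow>\<^sub>M PiM UNIV (\<lambda>_::'i. borel :: real measure)"
  by (rule measurable_PiM_single') (auto simp: space_PiM)

definition normalized_product :: "'n::finite \<Rightarrow> 'n \<Rightarrow> ('n \<Rightarrow> real) \<Rightarrow> real" where
  "normalized_product i j w = w i * w j / (\<Sum>k\<in>UNIV. (w k)\<^sup>2)"

lemma borel_measurable_normalized_product [measurable]:
  "normalized_product i j \<in> borel_measurable (PiM UNIV (\<lambda>_. borel))"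
  unfolding normalized_product_def[abs_def] by measurable

lemma abs_normalized_product_le_1: "\<bar>normalized_product i j w\<bar> \<le> 1"
proof -
  have "\<bar>w i * w j\<bar> \<le> ((w i)\<^sup>2 + (w j)\<^sup>2) / 2"
    using sum_squares_bound[of "\<bar>w i\<bar>" "\<bar>w j\<bar>"] by (simp add: abs_mult)
  also have "\<dots> \<le> (\<Sum>k\<in>UNIV. (w k)\<^sup>2)"
    using member_le_sum[of i UNIV "\<lambda>k. (w k)\<^sup>2"] member_le_sum[of j UNIV "\<lambda>k. (w k)\<^sup>2"]
    by simp
  finally show ?thesis
    by (cases "(\<Sum>k\<in>UNIV. (w k)\<^sup>2) = 0") (simp_all add: normalized_product_def)
qed

lemma sum_normalized_product_diag_le_1: "(\<Sum>k\<in>UNIV. normalized_product k k w) \<le> 1"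
  by (simp add: normalized_product_def sum_divide_distrib[symmetric] power2_eq_square)

lemma normalized_product_sign_flip:
  assumes "i \<noteq> j"
  shows "normalized_product i j (w(i := - w i)) = - normalized_product i j w"
proof -
  have "(\<Sum>k\<in>UNIV. ((w(i := - w i)) k)\<^sup>2) = (\<Sum>k\<in>UNIV. (w k)\<^sup>2)"
    by (intro sum.cong) auto
  with assms show ?thesis by (simp add: normalized_product_def)
qed

lemma normalized_product_permute:
  assumes "p permutes UNIV"
  shows "normalized_product i j (w \<circ> p) = normalized_product (p i) (p j) w"
  using sum.permute[OF assms, of "\<lambda>k. (w k)\<^sup>2"] by (simp add: normalized_product_def comp_def)

definition rayleigh_quotient :: "real^'n^'n \<Rightarrow> real^'n \<Rightarrow> real" where
  "rayleigh_quotient U x = (x \<bullet> (U *v x)) / (norm x)\<^sup>2"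

lemma power2_norm_vec_lambda: "(norm (vec_lambda w :: real^'n))\<^sup>2 = (\<Sum>k\<in>UNIV. (w k)\<^sup>2)"
  unfolding power2_norm_eq_inner by (simp add: inner_vec_def power2_eq_square)

lemma rayleigh_quotient_vec_lambda:
  "rayleigh_quotient U (vec_lambda w) = (\<Sum>i\<in>UNIV. \<Sum>j\<in>UNIV. U$i$j * normalized_product i j w)"
  by (simp add: rayleigh_quotient_def normalized_product_def power2_norm_vec_lambda
      inner_vec_def matrix_vector_mult_def sum_distrib_left sum_divide_distrib mult_ac)

lemma borel_measurable_rayleigh_quotient [measurable]:
  "(\<lambda>w. rayleigh_quotient U (vec_lambda w)) \<in> borel_measurable (PiM UNIV (\<lambda>_. borel))"
  unfolding rayleigh_quotient_vec_lambda by measurable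

lemma rayleigh_quotient_nonneg: "psd U \<Longrightarrow> 0 \<le> rayleigh_quotient U x"
  by (simp add: psd_def rayleigh_quotient_def)

lemma less_rayleigh_quotient:
  assumes "\<delta> * (norm x)\<^sup>2 < x \<bullet> (U *v x)"
  shows "\<delta> < rayleigh_quotient U x"
proof -
  from assms have "x \<noteq> 0" by auto
  with assms show ?thesis by (simp add: rayleigh_quotient_def pos_less_divide_eq)
qed

lemma psd_diag_nonneg:
  assumes "psd U"
  shows "0 \<le> U$i$i"
proof -
  have "axis i 1 \<bullet> (U *v axis i 1) = U$i$i"
    using cart_eq_inner_axis[of "U *v axis i 1" i]
    by (simp add: matrix_vector_mult_basis column_def inner_commute)
  with assms show ?thesis by (metis psd_def)
qed

locale exchangeable_sign_symmetric = prob_space Q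
  for Q :: "('n::finite \<Rightarrow> real) measure" +
  assumes sets_eq: "sets Q = sets (PiM UNIV (\<lambda>_. borel))"
    and distr_sign_flip: "\<And>i. distr Q Q (\<lambda>w. w(i := - w i)) = Q"
    and distr_permute: "\<And>p. p permutes UNIV \<Longrightarrow> distr Q Q (\<lambda>w. w \<circ> p) = Q"
begin

declare sets_eq [measurable_cong]

lemma integrable_normalized_product: "integrable Q (normalized_product i j)"
  by (rule integrable_const_bound[where B=1])
    (simp_all add: abs_normalized_product_le_1)

lemma integral_normalized_product_off_diag:
  assumes "i \<noteq> j"
  shows "(\<integral>w. normalized_product i j w \<partial>Q) = 0"
proof -
  have "(\<integral>w. normalized_product i j w \<partial>Q)
      = (\<integral>w. normalized_product i j (w(i := - w i)) \<partial>Q)"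
    by (rule integral_distr_invariant[symmetric, OF _ distr_sign_flip]) measurable
  also have "\<dots> = - (\<integral>w. normalized_product i j w \<partial>Q)"
    by (simp add: normalized_product_sign_flip[OF assms])
  finally show ?thesis by simp
qed

lemma integral_normalized_product_diag:
  "(\<integral>w. normalized_product i i w \<partial>Q) = (\<integral>w. normalized_product j j w \<partial>Q)"
proof -
  have swap: "Transposition.transpose i j permutes UNIV"
    by (simp add: permutes_swap_id)
  have "(\<integral>w. normalized_product j j w \<partial>Q)
      = (\<integral>w. normalized_product j j (w \<circ> Transposition.transpose i j) \<partial>Q)"
    by (rule integral_distr_invariant[symmetric, OF _ distr_permute[OF swap]]) measurable
  also have "\<dots> = (\<integral>w. normalized_product i i w \<partial>Q)"
    by (simp add: normalized_product_permute[OF swap])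
  finally show ?thesis by simp
qed

lemma integral_normalized_product_diag_le:
  "(\<integral>w. normalized_product i i w \<partial>Q) \<le> 1 / CARD('n)"
proof -
  have "CARD('n) * (\<integral>w. normalized_product i i w \<partial>Q)
      = (\<Sum>k::'n\<in>UNIV. \<integral>w. normalized_product i i w \<partial>Q)"
    by simp
  also have "\<dots> = (\<Sum>k\<in>UNIV. \<integral>w. normalized_product k k w \<partial>Q)"
    by (intro sum.cong refl integral_normalized_product_diag)
  also have "\<dots> = (\<integral>w. (\<Sum>k\<in>UNIV. normalized_product k k w) \<partial>Q)"
    by (simp add: integrable_normalized_product)
  also have "\<dots> \<le> (\<integral>w. 1 \<partial>Q)"
    by (intro integral_mono)
      (simp_all add: integrable_normalized_product sum_normalized_product_diag_le_1)
  finally show ?thesis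
    by (simp add: prob_space field_simps)
qed

lemma integral_rayleigh_quotient_le:
  assumes "psd U"
  shows "(\<integral>w. rayleigh_quotient U (vec_lambda w) \<partial>Q) \<le> trace U / CARD('n)"
proof -
  have "(\<integral>w. rayleigh_quotient U (vec_lambda w) \<partial>Q)
      = (\<Sum>i\<in>UNIV. \<Sum>j\<in>UNIV. U$i$j * (\<integral>w. normalized_product i j w \<partial>Q))"
    by (simp add: rayleigh_quotient_vec_lambda integrable_normalized_product)
  also have "\<dots> = (\<Sum>i\<in>UNIV. \<Sum>j\<in>UNIV.
      if j = i then U$i$i * (\<integral>w. normalized_product i i w \<partial>Q) else 0)"
    by (intro sum.cong refl) (simp add: integral_normalized_product_off_diag)
  also have "\<dots> = (\<Sum>i\<in>UNIV. U$i$i * (\<integral>w. normalized_product i i w \<partial>Q))"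
    by simp
  also have "\<dots> \<le> (\<Sum>i\<in>UNIV. U$i$i * (1 / CARD('n)))"
    by (intro sum_mono mult_left_mono integral_normalized_product_diag_le psd_diag_nonneg assms)
  also have "\<dots> = trace U / CARD('n)"
    by (simp add: trace_def sum_divide_distrib)
  finally show ?thesis .
qed

lemma prob_rayleigh_quotient_ge:
  assumes "psd U" and "\<delta> > 0"
  shows "prob {w \<in> space Q. \<delta> \<le> rayleigh_quotient U (vec_lambda w)}
    \<le> trace U / (\<delta> * CARD('n))"
proof -
  have "prob {w \<in> space Q. \<delta> \<le> rayleigh_quotient U (vec_lambda w)}
      \<le> (\<integral>w. rayleigh_quotient U (vec_lambda w) \<partial>Q) / \<delta>"
  proof (rule integral_Markov_inequality_measure[where A="space Q", OF _ _ _ assms(2)])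
    show "integrable Q (\<lambda>w. rayleigh_quotient U (vec_lambda w))"
      by (simp add: rayleigh_quotient_vec_lambda integrable_normalized_product)
  qed (simp_all add: rayleigh_quotient_nonneg assms(1))
  also have "\<dots> \<le> trace U / (\<delta> * CARD('n))"
    using integral_rayleigh_quotient_le[OF assms(1)] assms(2)
    by (simp add: divide_right_mono field_simps)
  finally show ?thesis .
qed

end

lemma exchangeable_sign_symmetric_PiM:
  assumes "symmetric_distribution P"
  shows "exchangeable_sign_symmetric (PiM UNIV (\<lambda>_::'n::finite. P))"
proof -
  have P: "prob_space P" and sets_P: "sets P = sets borel"
    and P_symm: "distr P borel uminus = P"
    using assms by (auto simp: symmetric_distribution_def)
  interpret P_prod: product_prob_space "\<lambda>_::'n. P"
    by (rule product_prob_spaceI[OF P])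
  show ?thesis
  proof (intro exchangeable_sign_symmetric.intro exchangeable_sign_symmetric_axioms.intro)
    show "prob_space (PiM UNIV (\<lambda>_::'n. P))"
      using P by (rule prob_space_PiM)
  next
    show "sets (PiM UNIV (\<lambda>_::'n. P)) = sets (PiM UNIV (\<lambda>_. borel))"
      using sets_P by (intro sets_PiM_cong) auto
  next
    fix i :: 'n
    define f :: "'n \<Rightarrow> real \<Rightarrow> real"
      where "f k = (if k = i then uminus else (\<lambda>x. x))" for k
    have "distr P P uminus = distr P borel uminus"
      by (rule distr_cong) (simp_all add: sets_P)
    with P_symm have "distr (PiM UNIV (\<lambda>_. P)) (PiM UNIV (\<lambda>_. P)) (\<lambda>w. \<lambda>k\<in>UNIV. f k (w k))
        = PiM UNIV (\<lambda>_. P)"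
      by (intro P_prod.distr_PiM_componentwise)
        (auto simp: f_def measurable_cong_sets[OF sets_P sets_P])
    moreover have "(\<lambda>k\<in>UNIV. f k (w k)) = w(i := - w i)" for w
      by (auto simp: f_def)
    ultimately show
      "distr (PiM UNIV (\<lambda>_. P)) (PiM UNIV (\<lambda>_. P)) (\<lambda>w. w(i := - w i)) = PiM UNIV (\<lambda>_. P)"
      by simp
  next
    fix p :: "'n \<Rightarrow> 'n" assume "p permutes UNIV"
    then show "distr (PiM UNIV (\<lambda>_. P)) (PiM UNIV (\<lambda>_. P)) (\<lambda>w. w \<circ> p) = PiM UNIV (\<lambda>_. P)"
      using distr_PiM_reindex[of UNIV "\<lambda>_. P" p UNIV] P
      by (simp add: permutes_inj comp_def restrict_UNIV)
  qed
qed

theorem lemma4: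
  fixes Pw :: "real measure" and U :: "real^'n^'n" and \<delta> :: real
  assumes "symmetric_distribution Pw"
    and "psd U"
    and "\<delta> > 0"
  shows "measure (PiM UNIV (\<lambda>i::'n. Pw))
           {w \<in> space (PiM UNIV (\<lambda>i::'n. Pw)).
              vec_lambda w \<bullet> (U *v vec_lambda w) > \<delta> * (norm (vec_lambda w))\<^sup>2}
         \<le> trace U / (\<delta> * real CARD('n))"
proof -
  let ?W = "PiM UNIV (\<lambda>i::'n. Pw)"
  interpret exchangeable_sign_symmetric ?W
    using assms(1) by (rule exchangeable_sign_symmetric_PiM)
  have "measure ?W {w \<in> space ?W. vec_lambda w \<bullet> (U *v vec_lambda w) > \<delta> * (norm (vec_lambda w))\<^sup>2}
      \<le> measure ?W {w \<in> space ?W. \<delta> \<le> rayleigh_quotient U (vec_lambda w)}"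
    by (intro finite_measure_mono) (auto dest: less_rayleigh_quotient)
  also have "\<dots> \<le> trace U / (\<delta> * CARD('n))"
    using assms(2,3) by (rule prob_rayleigh_quotient_ge)
  finally show ?thesis .
qed

end
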